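(* Let $R_1,R_2$ be commutative rings with nonzero identity, $I_1$ an ideal of $R_1$, $I_2$ an ideal of $R_2$, $R=R_1\times R_2$ and $I=I_1\times I_2$. Let $x\in R_1\setminus I_1$ and $y\in R_2\setminus I_2$. Then for every $a\in I_1$ and $b\in I_2$, the vertex $(x,b)$ is adjacent to the vertex $(a,y)$ in $\Gamma''_I(R)$.
   Context: $R_1\times R_2$ has componentwise operations. For a commutative ring $S$ and an ideal $J$ of $S$, $\Gamma''_J(S)$ is the simple undirected graph whose vertex set is $\{x\in S\setminus J : xS+J\neq S\}$, with distinct vertices $x,y$ adjacent if and only if $x\notin yS+J$ and $y\notin xS+J$. *)

theory Defs
  imports "HOL-Algebra.Algebra"
begin

definition elt_plus_ideal :: "('a, 'm) ring_scheme \<Rightarrow> 'a \<Rightarrow> 'a set \<Rightarrow> 'a set" where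
  "elt_plus_ideal S x J = {x \<otimes>\<^bsub>S\<^esub> s \<oplus>\<^bsub>S\<^esub> j | s j. s \<in> carrier S \<and> j \<in> J}"

definition gamma2_verts :: "('a, 'm) ring_scheme \<Rightarrow> 'a set \<Rightarrow> 'a set" where
  "gamma2_verts S J = {x \<in> carrier S - J. elt_plus_ideal S x J \<noteq> carrier S}"

definition gamma2_adj :: "('a, 'm) ring_scheme \<Rightarrow> 'a set \<Rightarrow> 'a \<Rightarrow> 'a \<Rightarrow> bool" where
  "gamma2_adj S J x y \<longleftrightarrow> x \<in> gamma2_verts S J \<and> y \<in> gamma2_verts S J \<and> x \<noteq> y \<and>
     x \<notin> elt_plus_ideal S y J \<and> y \<notin> elt_plus_ideal S x J"

end

theory Submission
  imports Defs
begin

text \<open>Since \<open>a \<in> I\<^sub>1\<close>, every element of \<open>(a, y) R + I\<close> has first component in \<open>I\<^sub>1\<close>,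
  so it cannot contain \<open>(x, b)\<close> with \<open>x \<notin> I\<^sub>1\<close>; symmetrically \<open>(x, b) R + I\<close> cannot contain
  \<open>(a, y)\<close>. These two non-memberships already witness that both elements are proper
  vertices, and they force the two elements to be distinct.\<close>

lemma RDirProd_mult: "(a, b) \<otimes>\<^bsub>RDirProd R S\<^esub> (c, d) = (a \<otimes>\<^bsub>R\<^esub> c, b \<otimes>\<^bsub>S\<^esub> d)"
  by (simp add: RDirProd_def DirProd_def monoid.defs)

lemma RDirProd_add: "(a, b) \<oplus>\<^bsub>RDirProd R S\<^esub> (c, d) = (a \<oplus>\<^bsub>R\<^esub> c, b \<oplus>\<^bsub>S\<^esub> d)"
  by (simp add: RDirProd_def DirProd_def monoid.defs)

lemma ideal_RDirProd:
  assumes "ideal I R" and "ideal J S"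
  shows "ideal (I \<times> J) (RDirProd R S)"
proof -
  have rings: "ring R" "ring S"
    using assms by (simp_all add: ideal.axioms(2))
  have "subgroup (I \<times> J) (add_monoid R \<times>\<times> add_monoid S)"
    using assms rings
    by (intro DirProd_subgroups)
       (simp_all add: abelian_group.a_group ring.is_abelian_group additive_subgroup.a_subgroup ideal.axioms(1))
  then have "subgroup (I \<times> J) (add_monoid (RDirProd R S))"
    unfolding RDirProd_add_monoid .
  then show ?thesis
    using assms
    by (intro idealI RDirProd_ring rings)
       (auto simp: RDirProd_carrier RDirProd_mult ideal.I_l_closed ideal.I_r_closed)
qed

lemma elt_plus_ideal_RDirProd_subset:
  "elt_plus_ideal (RDirProd R S) (p, q) (I \<times> J) \<subseteq> elt_plus_ideal R p I \<times> elt_plus_ideal S q J"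
proof
  fix z
  assume "z \<in> elt_plus_ideal (RDirProd R S) (p, q) (I \<times> J)"
  then obtain s t i j where "s \<in> carrier R" "t \<in> carrier S" "i \<in> I" "j \<in> J"
    and "z = (p, q) \<otimes>\<^bsub>RDirProd R S\<^esub> (s, t) \<oplus>\<^bsub>RDirProd R S\<^esub> (i, j)"
    unfolding elt_plus_ideal_def RDirProd_carrier by blast
  then show "z \<in> elt_plus_ideal R p I \<times> elt_plus_ideal S q J"
    unfolding elt_plus_ideal_def RDirProd_mult RDirProd_add by blast
qed

lemma elt_plus_ideal_subset_ideal:
  assumes "ideal J S" and "x \<in> J"
  shows "elt_plus_ideal S x J \<subseteq> J"
  using assms
  by (auto simp: elt_plus_ideal_def ideal.I_r_closed additive_subgroup.a_closed ideal.axioms(1))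

lemma self_mem_elt_plus_ideal:
  assumes "ideal J S" and "x \<in> carrier S"
  shows "x \<in> elt_plus_ideal S x J"
proof -
  interpret ideal J S by fact
  have "x \<otimes>\<^bsub>S\<^esub> \<one>\<^bsub>S\<^esub> \<oplus>\<^bsub>S\<^esub> \<zero>\<^bsub>S\<^esub> \<in> elt_plus_ideal S x J"
    unfolding elt_plus_ideal_def using additive_subgroup.zero_closed[OF is_additive_subgroup] by blast
  then show ?thesis
    using assms(2) by simp
qed

lemma gamma2_adjI:
  assumes "ideal J S"
    and "v \<in> carrier S - J" and "w \<in> carrier S - J"
    and v_notin: "v \<notin> elt_plus_ideal S w J" and w_notin: "w \<notin> elt_plus_ideal S v J"
  shows "gamma2_adj S J v w"
proof -
  have "v \<in> gamma2_verts S J" "w \<in> gamma2_verts S J"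
    using assms by (auto simp: gamma2_verts_def)
  moreover have "v \<noteq> w"
    using self_mem_elt_plus_ideal[OF assms(1)] assms(2) w_notin by blast
  ultimately show ?thesis
    using v_notin w_notin by (simp add: gamma2_adj_def)
qed

theorem lemma2p6:
  fixes R1 :: "('a, 'm) ring_scheme" and R2 :: "('b, 'n) ring_scheme"
    and I1 :: "'a set" and I2 :: "'b set"
  assumes "cring R1" and "cring R2"
    and "\<one>\<^bsub>R1\<^esub> \<noteq> \<zero>\<^bsub>R1\<^esub>" and "\<one>\<^bsub>R2\<^esub> \<noteq> \<zero>\<^bsub>R2\<^esub>"
    and "ideal I1 R1" and "ideal I2 R2"
    and "x \<in> carrier R1 - I1" and "y \<in> carrier R2 - I2"
    and "a \<in> I1" and "b \<in> I2"
  shows "gamma2_adj (RDirProd R1 R2) (I1 \<times> I2) (x, b) (a, y)"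
proof (rule gamma2_adjI)
  show "ideal (I1 \<times> I2) (RDirProd R1 R2)"
    using assms(5,6) by (rule ideal_RDirProd)
  have "a \<in> carrier R1" "b \<in> carrier R2"
    using assms(5,6,9,10) by (simp_all add: ideal.Icarr)
  then show "(x, b) \<in> carrier (RDirProd R1 R2) - I1 \<times> I2"
    and "(a, y) \<in> carrier (RDirProd R1 R2) - I1 \<times> I2"
    using assms(7,8) by (auto simp: RDirProd_carrier)
  show "(x, b) \<notin> elt_plus_ideal (RDirProd R1 R2) (a, y) (I1 \<times> I2)"
    using elt_plus_ideal_RDirProd_subset[of R1 R2 a y I1 I2]
      elt_plus_ideal_subset_ideal[OF assms(5,9)] assms(7)
    by blast
  show "(a, y) \<notin> elt_plus_ideal (RDirProd R1 R2) (x, b) (I1 \<times> I2)"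
    using elt_plus_ideal_RDirProd_subset[of R1 R2 x b I1 I2]
      elt_plus_ideal_subset_ideal[OF assms(6,10)] assms(8)
    by blast
qed

end
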